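(* Let $m,p\in\mathbb{N}$ with $m\ge p$, let $w=(w_1,\dots,w_m)^t\in\mathbb{R}^m$, and let $Z=(z_1,\dots,z_m)^t$ be an $m\times p$ real matrix such that any set of $p$ distinct row vectors of $Z$ is linearly independent. Then there exist $R>0$ and $\delta>0$ (possibly depending on $w$ and $Z$) such that $$\prod_{i=1}^m\frac{1}{1+|w_i-z_i^t\beta|}\le\frac{1}{(1+\delta|\beta|)^{m-p+1}}$$ for all $\beta\in\mathbb{R}^p$ with $|\beta|\ge R$.
   Context: $|\beta|$ is the Euclidean norm. *)

theory Defs
  imports "HOL-Analysis.Analysis"
begin

end

theory Submission
  imports Defs
begin

text \<open>
  Any \<open>p\<close> of the rows \<open>z\<^sub>i\<close> form a basis, so \<open>\<Sum>\<^sub>i\<^sub>\<in>\<^sub>S \<bar>z\<^sub>i\<^sup>t\<beta>\<bar>\<close> is a norm on \<open>\<real>\<^sup>p\<close> for every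
  \<open>p\<close>-set \<open>S\<close> of indices; by compactness of the unit sphere and finiteness of the
  number of such \<open>S\<close>, there is one \<open>c > 0\<close> with \<open>\<Sum>\<^sub>i\<^sub>\<in>\<^sub>S \<bar>z\<^sub>i\<^sup>t\<beta>\<bar> \<ge> p c \<bar>\<beta>\<bar>\<close> for all \<open>S\<close>.
  Hence fewer than \<open>p\<close> indices satisfy \<open>\<bar>z\<^sub>i\<^sup>t\<beta>\<bar> < c \<bar>\<beta>\<bar>\<close>, and for the remaining
  \<open>m - p + 1\<close> or more indices, \<open>\<bar>w\<^sub>i - z\<^sub>i\<^sup>t\<beta>\<bar> \<ge> c \<bar>\<beta>\<bar> / 2\<close> once \<open>\<bar>\<beta>\<bar>\<close> dominates
  the \<open>w\<^sub>i\<close>. All other factors of the product are at most \<open>1\<close>.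
\<close>

lemma independent_card_DIM_inner_nonzero:
  fixes V :: "'a::euclidean_space set"
  assumes "independent V" "card V = DIM('a)" "u \<noteq> 0"
  shows "\<exists>v\<in>V. v \<bullet> u \<noteq> 0"
proof (rule ccontr)
  assume "\<not> ?thesis"
  have "u \<in> span V"
    using card_ge_dim_independent[of V UNIV] assms(1,2) by auto
  moreover from \<open>\<not> ?thesis\<close> have "\<And>v. v \<in> V \<Longrightarrow> orthogonal u v"
    by (auto simp: orthogonal_def inner_commute)
  ultimately have "orthogonal u u"
    by (rule orthogonal_to_span)
  with \<open>u \<noteq> 0\<close> show False
    by (simp add: orthogonal_def)
qed

lemma sum_abs_inner_bounded_below:
  fixes Z :: "'i \<Rightarrow> 'a::euclidean_space"
  assumes "finite S" and nondegenerate: "\<And>u. u \<noteq> 0 \<Longrightarrow> \<exists>i\<in>S. Z i \<bullet> u \<noteq> 0"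
  shows "\<exists>c>0. \<forall>x. c * norm x \<le> (\<Sum>i\<in>S. \<bar>Z i \<bullet> x\<bar>)"
proof -
  define h where "h x = (\<Sum>i\<in>S. \<bar>Z i \<bullet> x\<bar>)" for x
  have "continuous_on (sphere 0 1) h"
    unfolding h_def by (intro continuous_intros)
  moreover have "sphere (0::'a) 1 \<noteq> {}"
    by simp
  ultimately obtain u where u: "u \<in> sphere 0 1" and u_min: "\<And>y. y \<in> sphere 0 1 \<Longrightarrow> h u \<le> h y"
    using continuous_attains_inf[OF compact_sphere] by blast
  have "u \<noteq> 0"
    using u by auto
  then obtain i where "i \<in> S" "Z i \<bullet> u \<noteq> 0"
    using nondegenerate by blast
  then have "h u > 0"
    unfolding h_def using \<open>finite S\<close> by (intro sum_pos2) auto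
  moreover have "h u * norm x \<le> h x" for x
  proof (cases "x = 0")
    case False
    then have "h u \<le> h ((1 / norm x) *\<^sub>R x)"
      by (intro u_min) simp
    also have "\<dots> = h x / norm x"
      by (simp add: h_def abs_mult sum_divide_distrib)
    finally show ?thesis
      using False by (simp add: field_simps)
  qed (simp add: h_def)
  ultimately show ?thesis
    unfolding h_def by blast
qed

lemma independent_rows_sum_abs_inner_bounded_below:
  fixes Z :: "'i \<Rightarrow> 'a::euclidean_space"
  assumes "inj_on Z S" "independent (Z ` S)" "card S = DIM('a)"
  shows "\<exists>c>0. \<forall>x. c * norm x \<le> (\<Sum>i\<in>S. \<bar>Z i \<bullet> x\<bar>)"
proof (rule sum_abs_inner_bounded_below)
  show "finite S"
    using assms(3) card.infinite by fastforce
  show "\<exists>i\<in>S. Z i \<bullet> u \<noteq> 0" if "u \<noteq> 0" for u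
    using independent_card_DIM_inner_nonzero[of "Z ` S" u] assms that
    by (auto simp: card_image)
qed

lemma card_less_if_subset_sums_ge:
  fixes f :: "'i \<Rightarrow> real"
  assumes "n > 0" and sums_ge: "\<And>S. S \<subseteq> A \<Longrightarrow> card S = n \<Longrightarrow> n * t \<le> (\<Sum>i\<in>S. f i)"
  shows "card {i\<in>A. f i < t} < n"
proof (rule ccontr)
  assume "\<not> ?thesis"
  then obtain S where S: "S \<subseteq> {i\<in>A. f i < t}" "card S = n" "finite S"
    by (meson not_less obtain_subset_with_card_n)
  then have "(\<Sum>i\<in>S. f i) < (\<Sum>i\<in>S. t)"
    using \<open>n > 0\<close> by (intro sum_strict_mono) auto
  with S sums_ge[of S] show False
    by auto
qed

lemma independent_rows_few_small_inner:
  fixes Z :: "'i \<Rightarrow> 'a::euclidean_space"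
  assumes "finite A"
    and rows_independent: "\<And>S. S \<subseteq> A \<Longrightarrow> card S = DIM('a) \<Longrightarrow> inj_on Z S \<and> independent (Z ` S)"
  shows "\<exists>c>0. \<forall>x. card {i\<in>A. \<bar>Z i \<bullet> x\<bar> < c * norm x} < DIM('a)"
proof -
  define SS where "SS = {S. S \<subseteq> A \<and> card S = DIM('a)}"
  have "finite SS"
    using finite_Collect_subsets[OF \<open>finite A\<close>] unfolding SS_def by (rule rev_finite_subset) blast
  have "\<exists>c>0. \<forall>x. c * norm x \<le> (\<Sum>i\<in>S. \<bar>Z i \<bullet> x\<bar>)" if "S \<in> SS" for S
    using that rows_independent[of S] independent_rows_sum_abs_inner_bounded_below[of Z S]
    unfolding SS_def by blast
  then obtain cS where cS: "\<And>S. S \<in> SS \<Longrightarrow> cS S > 0 \<and> (\<forall>x. cS S * norm x \<le> (\<Sum>i\<in>S. \<bar>Z i \<bullet> x\<bar>))"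
    by metis
  \<comment> \<open>The \<open>1\<close> keeps the minimum well defined when \<open>A\<close> has fewer than \<open>DIM('a)\<close> elements.\<close>
  define M where "M = Min (insert 1 (cS ` SS))"
  have "M > 0"
    unfolding M_def using \<open>finite SS\<close> cS by (auto simp: Min_gr_iff)
  have M_le: "M \<le> cS S" if "S \<in> SS" for S
    unfolding M_def using \<open>finite SS\<close> that by (intro Min_le) auto
  define c where "c = M / DIM('a)"
  have "c > 0"
    unfolding c_def using \<open>M > 0\<close> by simp
  moreover have "card {i\<in>A. \<bar>Z i \<bullet> x\<bar> < c * norm x} < DIM('a)" for x
  proof (rule card_less_if_subset_sums_ge[where f = "\<lambda>i. \<bar>Z i \<bullet> x\<bar>"])
    fix S assume "S \<subseteq> A" "card S = DIM('a)"
    then have "S \<in> SS"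
      unfolding SS_def by blast
    have "DIM('a) * (c * norm x) = M * norm x"
      unfolding c_def by simp
    also have "\<dots> \<le> cS S * norm x"
      using M_le[OF \<open>S \<in> SS\<close>] by (intro mult_right_mono) auto
    also have "\<dots> \<le> (\<Sum>i\<in>S. \<bar>Z i \<bullet> x\<bar>)"
      using cS[OF \<open>S \<in> SS\<close>] by blast
    finally show "DIM('a) * (c * norm x) \<le> (\<Sum>i\<in>S. \<bar>Z i \<bullet> x\<bar>)" .
  qed simp
  ultimately show ?thesis
    by blast
qed

lemma prod_inverse_one_plus_le_power:
  fixes f :: "'i \<Rightarrow> real"
  assumes "finite A" "G \<subseteq> A" "k \<le> card G" "0 \<le> d"
    and nonneg: "\<And>i. i \<in> A \<Longrightarrow> 0 \<le> f i" and large: "\<And>i. i \<in> G \<Longrightarrow> d \<le> f i"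
  shows "(\<Prod>i\<in>A. 1 / (1 + f i)) \<le> 1 / (1 + d) ^ k"
proof -
  have factor_bounds: "0 \<le> 1 / (1 + f i)" "1 / (1 + f i) \<le> 1" if "i \<in> A" for i
    using nonneg[OF that] by auto
  have "(\<Prod>i\<in>A. 1 / (1 + f i)) = (\<Prod>i\<in>G. 1 / (1 + f i)) * (\<Prod>i\<in>A - G. 1 / (1 + f i))"
    using assms(1,2) by (metis prod.subset_diff mult.commute)
  also have "\<dots> \<le> (\<Prod>i\<in>G. 1 / (1 + f i))"
    using factor_bounds \<open>G \<subseteq> A\<close> by (intro mult_left_le prod_le_1 prod_nonneg) auto
  also have "\<dots> \<le> (\<Prod>i\<in>G. 1 / (1 + d))"
    using \<open>G \<subseteq> A\<close> nonneg large \<open>0 \<le> d\<close>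
    by (intro prod_mono conjI frac_le) (auto intro: factor_bounds)
  also have "\<dots> = (1 / (1 + d)) ^ card G"
    by simp
  also have "\<dots> \<le> (1 / (1 + d)) ^ k"
    using \<open>k \<le> card G\<close> \<open>0 \<le> d\<close> by (intro power_decreasing) auto
  finally show ?thesis
    by (simp add: power_one_over)
qed

theorem lemmaS4:
  fixes m :: nat and w :: "nat \<Rightarrow> real" and Z :: "nat \<Rightarrow> real ^ 'p"
  assumes "m \<ge> CARD('p)"
    and "\<forall>S. S \<subseteq> {1..m} \<and> card S = CARD('p) \<longrightarrow> inj_on Z S \<and> independent (Z ` S)"
  shows "\<exists>R > 0. \<exists>\<delta> > 0. \<forall>\<beta> :: real ^ 'p. norm \<beta> \<ge> R \<longrightarrow>
           (\<Prod>i = 1..m. 1 / (1 + \<bar>w i - Z i \<bullet> \<beta>\<bar>))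
             \<le> 1 / (1 + \<delta> * norm \<beta>) ^ (m - CARD('p) + 1)"
proof -
  obtain c where "c > 0" and few_small: "\<And>\<beta>. card {i\<in>{1..m}. \<bar>Z i \<bullet> \<beta>\<bar> < c * norm \<beta>} < CARD('p)"
    using independent_rows_few_small_inner[of "{1..m}" Z] assms(2) by auto
  define W where "W = (\<Sum>i=1..m. \<bar>w i\<bar>)"
  have W: "0 \<le> W" "\<And>i. i \<in> {1..m} \<Longrightarrow> \<bar>w i\<bar> \<le> W"
    unfolding W_def by (auto intro: sum_nonneg member_le_sum)
  have "(\<Prod>i = 1..m. 1 / (1 + \<bar>w i - Z i \<bullet> \<beta>\<bar>)) \<le> 1 / (1 + c / 2 * norm \<beta>) ^ (m - CARD('p) + 1)"
    if "norm \<beta> \<ge> 2 * W / c + 1" for \<beta> :: "real ^ 'p"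
  proof -
    define G where "G = {i\<in>{1..m}. c * norm \<beta> \<le> \<bar>Z i \<bullet> \<beta>\<bar>}"
    have "{1..m} - G = {i\<in>{1..m}. \<bar>Z i \<bullet> \<beta>\<bar> < c * norm \<beta>}"
      unfolding G_def by auto
    then have "card ({1..m} - G) < CARD('p)"
      using few_small by simp
    moreover have "G \<subseteq> {1..m}"
      unfolding G_def by blast
    ultimately have card_G: "m - CARD('p) + 1 \<le> card G"
      using card_Diff_subset[of G "{1..m}"] card_mono[of "{1..m}" G] \<open>m \<ge> CARD('p)\<close>
      by (simp add: finite_subset)
    have "2 * W \<le> c * norm \<beta>"
      using that \<open>c > 0\<close> by (simp add: field_simps)
    then have far: "c / 2 * norm \<beta> \<le> \<bar>w i - Z i \<bullet> \<beta>\<bar>" if "i \<in> G" for i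
      using that W(2)[of i] abs_triangle_ineq2_sym[of "Z i \<bullet> \<beta>" "w i"] unfolding G_def by auto
    show ?thesis
      using card_G far \<open>c > 0\<close> by (intro prod_inverse_one_plus_le_power[of "{1..m}" G]) (auto simp: G_def)
  qed
  moreover have "2 * W / c + 1 > 0" "c / 2 > 0"
    using W(1) \<open>c > 0\<close> by (auto intro: add_nonneg_pos)
  ultimately show ?thesis
    by blast
qed

end
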